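(* There exists a combinatorial auction (with truthful bids) that admits a Walrasian equilibrium on the original items, but in which for every Walrasian equilibrium $(x^*,p)$ on the original items some winning bidder $i$ pays strictly more than her winning level, i.e. $p\,a^{i*}>w(\mathcal I\setminus i,c,\mathcal K)-w(\mathcal I\setminus i,c-a^{i*},\mathcal K)$. In this sense, minimal Walrasian equilibrium prices may be strictly greater than winning-level payments.
   Context: Combinatorial auction: item types $j\in\mathcal J$ with supply $c_j\in\mathbb Z_{\ge1}$ (vector $c$); bidders $\mathcal I$; finite set of bids $\mathcal K$, bid $k$ made by bidder $i(k)$ with bundle $a^k\in\mathbb Z^J_{\ge0}$, $a^k\le c$, amount $b_k\ge0$; $\mathcal K_i$ = bids of bidder $i$. Feasible allocation: $x\in\{0,1\}^K$ with $\sum_k a^kx_k\le c$ and at most one accepted bid per bidder. $w(\mathcal C,c',\mathcal K)$ = maximum total bid amount over feasible allocations with supply $c'$ using only bids of bidders in $\mathcal C$. $x^*$ efficient allocation; $a^{i*},b_{i*}$ bundle and amount of $i$'s accepted bid ($\bm 0,0$ if none). A Walrasian equilibrium (on the original items, i.e. with no artificial items) is $(x^*,p)$ with $p\in\mathbb R^J_{\ge0}$, $s_i=b_{i*}-p\,a^{i*}\ge0$ for all $i$, $p\,a^k+s_{i(k)}\ge b_k$ for all bids $k$, and $p_j=0$ for every item in excess supply under $x^*$. *)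

theory Defs
  imports Complex_Main
begin

(* An auction is given by:
   J :: item types (finite set), c :: supply per item,
   I :: bidders, K :: bids (finite), bidder :: bid -> bidder i(k),
   a :: bid -> item -> quantity (bundle a^k), b :: bid -> real (amount b_k). *)

definition valid_auction ::
  "nat set \<Rightarrow> (nat \<Rightarrow> nat) \<Rightarrow> nat set \<Rightarrow> nat set \<Rightarrow> (nat \<Rightarrow> nat)
   \<Rightarrow> (nat \<Rightarrow> nat \<Rightarrow> nat) \<Rightarrow> (nat \<Rightarrow> real) \<Rightarrow> bool" where
  "valid_auction J c I K bidder a b \<longleftrightarrow>
     finite J \<and> finite I \<and> finite K \<and>
     (\<forall>j\<in>J. c j \<ge> 1) \<and>
     (\<forall>k\<in>K. bidder k \<in> I \<and> b k \<ge> 0 \<and> (\<forall>j\<in>J. a k j \<le> c j) \<and> (\<forall>j. j \<notin> J \<longrightarrow> a k j = 0))"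

(* A feasible allocation (given as the set S of accepted bids, i.e. x_k = 1 iff k \<in> S)
   with supply c' using only bids of bidders in C: at most one accepted bid per bidder. *)
definition feasible_alloc ::
  "nat set \<Rightarrow> nat set \<Rightarrow> (nat \<Rightarrow> nat) \<Rightarrow> (nat \<Rightarrow> nat \<Rightarrow> nat)
   \<Rightarrow> nat set \<Rightarrow> (nat \<Rightarrow> nat) \<Rightarrow> nat set \<Rightarrow> bool" where
  "feasible_alloc J K bidder a C c' S \<longleftrightarrow>
     S \<subseteq> K \<and> (\<forall>k\<in>S. bidder k \<in> C) \<and>
     (\<forall>j\<in>J. (\<Sum>k\<in>S. a k j) \<le> c' j) \<and> inj_on bidder S"

definition wval ::
  "nat set \<Rightarrow> nat set \<Rightarrow> (nat \<Rightarrow> nat) \<Rightarrow> (nat \<Rightarrow> nat \<Rightarrow> nat) \<Rightarrow> (nat \<Rightarrow> real)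
   \<Rightarrow> nat set \<Rightarrow> (nat \<Rightarrow> nat) \<Rightarrow> real" where
  "wval J K bidder a b C c' =
     Max ((\<lambda>S. \<Sum>k\<in>S. b k) ` {S. feasible_alloc J K bidder a C c' S})"

definition efficient_alloc ::
  "nat set \<Rightarrow> (nat \<Rightarrow> nat) \<Rightarrow> nat set \<Rightarrow> nat set \<Rightarrow> (nat \<Rightarrow> nat)
   \<Rightarrow> (nat \<Rightarrow> nat \<Rightarrow> nat) \<Rightarrow> (nat \<Rightarrow> real) \<Rightarrow> nat set \<Rightarrow> bool" where
  "efficient_alloc J c I K bidder a b S \<longleftrightarrow>
     feasible_alloc J K bidder a I c S \<and> (\<Sum>k\<in>S. b k) = wval J K bidder a b I c"

(* bundle a^{i*} and amount b_{i*} of bidder i's accepted bid (0 if none);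
   since at most one bid per bidder is accepted, the sums have at most one term *)
definition won_bundle :: "nat set \<Rightarrow> (nat \<Rightarrow> nat) \<Rightarrow> (nat \<Rightarrow> nat \<Rightarrow> nat) \<Rightarrow> nat \<Rightarrow> nat \<Rightarrow> nat" where
  "won_bundle S bidder a i = (\<lambda>j. \<Sum>k\<in>{k\<in>S. bidder k = i}. a k j)"

definition won_amount :: "nat set \<Rightarrow> (nat \<Rightarrow> nat) \<Rightarrow> (nat \<Rightarrow> real) \<Rightarrow> nat \<Rightarrow> real" where
  "won_amount S bidder b i = (\<Sum>k\<in>{k\<in>S. bidder k = i}. b k)"

definition bundle_price :: "nat set \<Rightarrow> (nat \<Rightarrow> real) \<Rightarrow> (nat \<Rightarrow> nat) \<Rightarrow> real" where
  "bundle_price J p q = (\<Sum>j\<in>J. p j * real (q j))"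

definition walrasian_eq ::
  "nat set \<Rightarrow> (nat \<Rightarrow> nat) \<Rightarrow> nat set \<Rightarrow> nat set \<Rightarrow> (nat \<Rightarrow> nat)
   \<Rightarrow> (nat \<Rightarrow> nat \<Rightarrow> nat) \<Rightarrow> (nat \<Rightarrow> real) \<Rightarrow> nat set \<Rightarrow> (nat \<Rightarrow> real) \<Rightarrow> bool" where
  "walrasian_eq J c I K bidder a b S p \<longleftrightarrow>
     (\<forall>j\<in>J. p j \<ge> 0) \<and>
     (\<forall>i\<in>I. won_amount S bidder b i - bundle_price J p (won_bundle S bidder a i) \<ge> 0) \<and>
     (\<forall>k\<in>K. bundle_price J p (a k)
              + (won_amount S bidder b (bidder k) - bundle_price J p (won_bundle S bidder a (bidder k)))
              \<ge> b k) \<and>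
     (\<forall>j\<in>J. (\<Sum>k\<in>S. a k j) < c j \<longrightarrow> p j = 0)"

end

theory Submission
  imports Defs
begin

text \<open>Two items \<open>0, 1\<close> are sold, one unit each. Bidders \<open>0\<close> and \<open>1\<close> bid 2 for item \<open>0\<close>
resp. \<open>1\<close>, bidder \<open>2\<close> bids 3 for the package of both. Awarding the single items is efficient
(value 4) and the package bidder loses, so every Walrasian price vector has \<open>p\<^sub>0 + p\<^sub>1 \<ge> 3\<close>
(and \<open>p\<^sub>0 = p\<^sub>1 = 3/2\<close> is one). The winning level of each single-item bidder is only
\<open>3 - 2 = 1\<close>, hence one of them pays more than her winning level. The values \<open>w\<close> are pinned
down from above by weak LP duality: item prices and bidder surpluses covering every bid bound
the value of every allocation.\<close>

lemma finite_feasible_allocs: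
  assumes "finite K"
  shows "finite {S. feasible_alloc J K bidder a C c' S}"
proof (rule finite_subset)
  show "{S. feasible_alloc J K bidder a C c' S} \<subseteq> Pow K"
    by (auto simp: feasible_alloc_def)
  show "finite (Pow K)"
    using assms by simp
qed

lemma feasible_alloc_empty: "feasible_alloc J K bidder a C c' {}"
  by (simp add: feasible_alloc_def)

lemma wval_ge_feasible:
  assumes "finite K" "feasible_alloc J K bidder a C c' S"
  shows "(\<Sum>k\<in>S. b k) \<le> wval J K bidder a b C c'"
  unfolding wval_def using assms by (intro Max_ge finite_imageI finite_feasible_allocs) auto

lemma wval_leI:
  assumes "finite K" "\<And>S. feasible_alloc J K bidder a C c' S \<Longrightarrow> (\<Sum>k\<in>S. b k) \<le> v"
  shows "wval J K bidder a b C c' \<le> v"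
  unfolding wval_def using assms feasible_alloc_empty[of J K bidder a C c']
  by (intro Max.boundedI finite_imageI finite_feasible_allocs) auto

lemma feasible_alloc_value_le_dual:
  assumes feasible: "feasible_alloc J K bidder a C c' S"
    and "finite C" and p_nonneg: "\<forall>j\<in>J. p j \<ge> 0" and s_nonneg: "\<forall>i\<in>C. s i \<ge> 0"
    and covers: "\<forall>k\<in>K. bidder k \<in> C \<longrightarrow> b k \<le> bundle_price J p (a k) + s (bidder k)"
  shows "(\<Sum>k\<in>S. b k) \<le> bundle_price J p c' + sum s C"
proof -
  have "S \<subseteq> K" and bidders: "bidder ` S \<subseteq> C" and inj: "inj_on bidder S"
    and within_supply: "\<forall>j\<in>J. (\<Sum>k\<in>S. a k j) \<le> c' j"
    using feasible by (auto simp: feasible_alloc_def)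
  have "(\<Sum>k\<in>S. b k) \<le> (\<Sum>k\<in>S. bundle_price J p (a k) + s (bidder k))"
    using covers \<open>S \<subseteq> K\<close> bidders by (intro sum_mono) auto
  also have "\<dots> = (\<Sum>j\<in>J. p j * real (\<Sum>k\<in>S. a k j)) + (\<Sum>i\<in>bidder ` S. s i)"
  proof -
    have "(\<Sum>k\<in>S. bundle_price J p (a k)) = (\<Sum>j\<in>J. \<Sum>k\<in>S. p j * real (a k j))"
      unfolding bundle_price_def by (rule sum.swap)
    also have "\<dots> = (\<Sum>j\<in>J. p j * real (\<Sum>k\<in>S. a k j))"
      by (simp add: sum_distrib_left)
    finally show ?thesis
      by (simp add: sum.distrib sum.reindex[OF inj])
  qed
  also have "\<dots> \<le> bundle_price J p c' + sum s C"
  proof (rule add_mono)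
    show "(\<Sum>j\<in>J. p j * real (\<Sum>k\<in>S. a k j)) \<le> bundle_price J p c'"
      unfolding bundle_price_def using within_supply p_nonneg
      by (intro sum_mono mult_left_mono) (auto simp del: of_nat_sum)
    show "(\<Sum>i\<in>bidder ` S. s i) \<le> sum s C"
      using s_nonneg bidders \<open>finite C\<close> by (intro sum_mono2) auto
  qed
  finally show ?thesis .
qed

lemma wval_le_dual:
  assumes "finite K" "finite C" "\<forall>j\<in>J. p j \<ge> 0" "\<forall>i\<in>C. s i \<ge> 0"
    "\<forall>k\<in>K. bidder k \<in> C \<longrightarrow> b k \<le> bundle_price J p (a k) + s (bidder k)"
  shows "wval J K bidder a b C c' \<le> bundle_price J p c' + sum s C"
  using assms by (intro wval_leI feasible_alloc_value_le_dual) auto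

lemma won_bundle_amount_of_winner:
  assumes "inj_on bidder S" "k \<in> S"
  shows "won_bundle S bidder a (bidder k) = a k" and "won_amount S bidder b (bidder k) = b k"
proof -
  have "{k'\<in>S. bidder k' = bidder k} = {k}"
    using assms by (auto dest: inj_onD)
  then show "won_bundle S bidder a (bidder k) = a k" "won_amount S bidder b (bidder k) = b k"
    by (simp_all add: won_bundle_def won_amount_def)
qed

lemma won_bundle_amount_of_loser:
  assumes "\<forall>k\<in>S. bidder k \<noteq> i"
  shows "won_bundle S bidder a i = (\<lambda>_. 0)" and "won_amount S bidder b i = 0"
proof -
  have no_bids: "{k\<in>S. bidder k = i} = {}"
    using assms by blast
  show "won_bundle S bidder a i = (\<lambda>_. 0)" "won_amount S bidder b i = 0"
    unfolding won_bundle_def won_amount_def no_bids by simp_all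
qed

lemma walrasian_eq_losing_bid:
  assumes "walrasian_eq J c I K bidder a b S p" "k \<in> K" "\<forall>k'\<in>S. bidder k' \<noteq> bidder k"
  shows "b k \<le> bundle_price J p (a k)"
proof -
  have "b k \<le> bundle_price J p (a k)
      + (won_amount S bidder b (bidder k) - bundle_price J p (won_bundle S bidder a (bidder k)))"
    using assms(1,2) unfolding walrasian_eq_def by blast
  then show ?thesis
    using won_bundle_amount_of_loser[OF assms(3)] by (simp add: bundle_price_def)
qed

definition example_bundle :: "nat \<Rightarrow> nat \<Rightarrow> nat" where
  "example_bundle k j = (if j \<le> 1 \<and> (k = j \<or> k = 2) then 1 else 0)"

definition example_amount :: "nat \<Rightarrow> real" where
  "example_amount k = (if k = 2 then 3 else 2)"

lemma example_valid: "valid_auction {0, 1} (\<lambda>_. 1) {0, 1, 2} {0, 1, 2} id example_bundle example_amount"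
  by (auto simp: valid_auction_def example_bundle_def example_amount_def)

lemma example_efficient: "efficient_alloc {0, 1} (\<lambda>_. 1) {0, 1, 2} {0, 1, 2} id example_bundle example_amount {0, 1}"
proof -
  have feasible: "feasible_alloc {0, 1} {0, 1, 2} id example_bundle {0, 1, 2} (\<lambda>_. 1) {0, 1}"
    by (simp add: feasible_alloc_def example_bundle_def)
  have "wval {0, 1} {0, 1, 2} id example_bundle example_amount {0, 1, 2} (\<lambda>_. 1)
      \<le> bundle_price {0, 1} (\<lambda>_. 2) (\<lambda>_. 1) + sum (\<lambda>_. 0) {0, 1, 2 :: nat}"
    by (rule wval_le_dual) (auto simp: bundle_price_def example_bundle_def example_amount_def)
  with wval_ge_feasible[OF _ feasible, of example_amount] show ?thesis
    unfolding efficient_alloc_def using feasible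
    by (simp add: bundle_price_def example_amount_def)
qed

lemma example_walrasian_eq:
  "walrasian_eq {0, 1} (\<lambda>_. 1) {0, 1, 2} {0, 1, 2} id example_bundle example_amount {0, 1} (\<lambda>_. 3/2)"
proof -
  have "won_bundle {0, 1} id example_bundle i = example_bundle i"
    "won_amount {0, 1} id example_amount i = example_amount i" if "i \<in> {0, 1}" for i
    using that won_bundle_amount_of_winner[of id "{0, 1}" i] by auto
  moreover have "won_bundle {0, 1} id example_bundle 2 = (\<lambda>_. 0)"
    "won_amount {0, 1} id example_amount 2 = 0"
    using won_bundle_amount_of_loser[of "{0, 1}" id 2] by auto
  ultimately show ?thesis
    by (auto simp: walrasian_eq_def bundle_price_def example_bundle_def example_amount_def)
qed

text \<open>Without bidder \<open>i\<close>, the package bid is worth 3 with full supply and the other single-item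
bid is worth 2 once \<open>i\<close>'s item is removed; the prices 1 for item \<open>i\<close> and 2 for the other item certify both values.\<close>

lemma example_winning_level:
  assumes "i \<in> {0, 1}"
  shows "wval {0, 1} {0, 1, 2} id example_bundle example_amount ({0, 1, 2} - {i}) (\<lambda>_. 1)
       - wval {0, 1} {0, 1, 2} id example_bundle example_amount ({0, 1, 2} - {i})
           (\<lambda>j. 1 - won_bundle {0, 1} id example_bundle i j) = 1"
proof -
  let ?w = "wval {0, 1} {0, 1, 2} id example_bundle example_amount ({0, 1, 2} - {i})"
  let ?p = "\<lambda>j. if j = i then 1 else 2 :: real"
  let ?reduced = "\<lambda>j. 1 - example_bundle i j"
  have won: "won_bundle {0, 1} id example_bundle i = example_bundle i"
    using won_bundle_amount_of_winner(1)[of id "{0, 1}" i example_bundle] assms by simp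
  have dual: "?w c' \<le> bundle_price {0, 1} ?p c'" for c'
    using wval_le_dual[of "{0, 1, 2}" "{0, 1, 2} - {i}" "{0, 1}" ?p "\<lambda>_. 0"] assms
    by (auto simp: bundle_price_def example_bundle_def example_amount_def)
  have "feasible_alloc {0, 1} {0, 1, 2} id example_bundle ({0, 1, 2} - {i}) (\<lambda>_. 1) {2}"
    "feasible_alloc {0, 1} {0, 1, 2} id example_bundle ({0, 1, 2} - {i}) ?reduced {1 - i}"
    using assms by (auto simp: feasible_alloc_def example_bundle_def)
  from this[THEN wval_ge_feasible[rotated], of example_amount]
  have "3 \<le> ?w (\<lambda>_. 1)" "2 \<le> ?w ?reduced"
    using assms by (auto simp: example_amount_def)
  moreover have "?w (\<lambda>_. 1) \<le> 3" "?w ?reduced \<le> 2"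
    using dual[of "\<lambda>_. 1"] dual[of ?reduced] assms
    by (auto simp: bundle_price_def example_bundle_def)
  ultimately show ?thesis
    unfolding won by simp
qed

lemma example_walrasian_price_exceeds_winning_level:
  assumes eq: "walrasian_eq {0, 1} (\<lambda>_. 1) {0, 1, 2} {0, 1, 2} id example_bundle example_amount {0, 1} p"
  shows "\<exists>i\<in>{0, 1, 2}. (\<exists>k\<in>{0, 1}. id k = i) \<and>
      bundle_price {0, 1} p (won_bundle {0, 1} id example_bundle i) >
        wval {0, 1} {0, 1, 2} id example_bundle example_amount ({0, 1, 2} - {i}) (\<lambda>_. 1)
        - wval {0, 1} {0, 1, 2} id example_bundle example_amount ({0, 1, 2} - {i})
            (\<lambda>j. 1 - won_bundle {0, 1} id example_bundle i j)"
proof -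
  have "example_amount 2 \<le> bundle_price {0, 1} p (example_bundle 2)"
    using walrasian_eq_losing_bid[OF eq] by simp
  then have "p 0 + p 1 \<ge> 3"
    by (simp add: bundle_price_def example_bundle_def example_amount_def)
  then have "p 0 > 1 \<or> p 1 > 1"
    by linarith
  then obtain i where "i \<in> {0, 1}" "p i > 1"
    by blast
  moreover have "bundle_price {0, 1} p (won_bundle {0, 1} id example_bundle i) = p i"
    using \<open>i \<in> {0, 1}\<close> won_bundle_amount_of_winner(1)[of id "{0, 1}" i example_bundle]
    by (auto simp: bundle_price_def example_bundle_def)
  moreover note example_winning_level[OF \<open>i \<in> {0, 1}\<close>]
  ultimately show ?thesis
    by (intro bexI[of _ i] conjI) auto
qed

theorem proposition1:
  shows "\<exists>J c I K bidder a b S.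
     valid_auction J c I K bidder a b \<and>
     efficient_alloc J c I K bidder a b S \<and>
     (\<exists>p. walrasian_eq J c I K bidder a b S p) \<and>
     (\<forall>p. walrasian_eq J c I K bidder a b S p \<longrightarrow>
        (\<exists>i\<in>I. (\<exists>k\<in>S. bidder k = i) \<and>
           bundle_price J p (won_bundle S bidder a i) >
             wval J K bidder a b (I - {i}) c
             - wval J K bidder a b (I - {i}) (\<lambda>j. c j - won_bundle S bidder a i j)))"
  using example_valid example_efficient example_walrasian_eq
    example_walrasian_price_exceeds_winning_level
  by blast

end
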